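(* Continuity of the value function of a zero-sum game fails in general under weak or setwise convergence of information structures: there exist a two-player zero-sum game $g$ satisfying Assumptions A2 and A4, a fixed prior $\zeta$, and a sequence of information structures $\mu_n$ with $\mathbb{X}$-marginal $\zeta$ converging weakly to an information structure $\mu$ with $\mathbb{X}$-marginal $\zeta$ such that $J^*(g,\mu_n)\not\to J^*(g,\mu)$; and likewise there exist such examples in which $\mu_n\to\mu$ setwise but $J^*(g,\mu_n)\not\to J^*(g,\mu)$.
   Context: $\mathbb{X},\mathbb{Y}^1,\mathbb{Y}^2$ are standard Borel spaces. An information structure is a probability measure $\mu$ on $\mathbb{X}\times\mathbb{Y}^1\times\mathbb{Y}^2$; its $\mathbb{X}$-marginal is the prior. A zero-sum game is $g=(c,\mathbb{U}^1,\mathbb{U}^2)$ with standard Borel action spaces and measurable cost $c:\mathbb{X}\times\mathbb{U}^1\times\mathbb{U}^2\to\mathbb{R}$; policies are measurable $\gamma^i:\mathbb{Y}^i\to\mathbb{U}^i$; $J(g,\mu,\gamma^1,\gamma^2)=\int c(x,\gamma^1(y^1),\gamma^2(y^2))\,d\mu$, Player 1 minimizes and Player 2 maximizes, and $J^*(g,\mu)$ is the value at a saddle-point equilibrium. Weak convergence: $\int f d\mu_n\to\int f d\mu$ for all bounded continuous $f$; setwise convergence: for all bounded measurable $f$ (equivalently $\mu_n(A)\to\mu(A)$ for all Borel $A$). A2: the cost is continuous and bounded. A4: each action space is compact. *)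

theory Defs
  imports "HOL-Probability.Probability"
begin

text \<open>Concrete standard Borel spaces: X = Y1 = Y2 = real (with the Euclidean topology and
its Borel sigma-algebra); action spaces are compact subsets of real.\<close>

type_synonym info = "(real \<times> real \<times> real) measure"

definition info_structure :: "info \<Rightarrow> bool" where
  "info_structure \<mu> \<longleftrightarrow> prob_space \<mu> \<and> sets \<mu> = sets borel"

definition prior :: "info \<Rightarrow> real measure" where
  "prior \<mu> = distr \<mu> borel fst"

definition A2 :: "(real \<times> real \<times> real \<Rightarrow> real) \<Rightarrow> real set \<Rightarrow> real set \<Rightarrow> bool" where
  "A2 c U1 U2 \<longleftrightarrow> continuous_on (UNIV \<times> U1 \<times> U2) c \<and> bounded (c ` (UNIV \<times> U1 \<times> U2))"

definition A4 :: "real set \<Rightarrow> real set \<Rightarrow> bool" where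
  "A4 U1 U2 \<longleftrightarrow> compact U1 \<and> compact U2 \<and> U1 \<noteq> {} \<and> U2 \<noteq> {}"

definition policy :: "real set \<Rightarrow> (real \<Rightarrow> real) \<Rightarrow> bool" where
  "policy U \<gamma> \<longleftrightarrow> \<gamma> \<in> borel_measurable borel \<and> range \<gamma> \<subseteq> U"

definition J :: "(real \<times> real \<times> real \<Rightarrow> real) \<Rightarrow> info \<Rightarrow> (real \<Rightarrow> real) \<Rightarrow> (real \<Rightarrow> real) \<Rightarrow> real" where
  "J c \<mu> \<gamma>1 \<gamma>2 = (\<integral>(x, y1, y2). c (x, \<gamma>1 y1, \<gamma>2 y2) \<partial>\<mu>)"

definition saddle :: "(real \<times> real \<times> real \<Rightarrow> real) \<Rightarrow> real set \<Rightarrow> real set \<Rightarrow> info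
    \<Rightarrow> (real \<Rightarrow> real) \<Rightarrow> (real \<Rightarrow> real) \<Rightarrow> bool" where
  "saddle c U1 U2 \<mu> \<gamma>1 \<gamma>2 \<longleftrightarrow> policy U1 \<gamma>1 \<and> policy U2 \<gamma>2 \<and>
     (\<forall>\<delta>1 \<delta>2. policy U1 \<delta>1 \<and> policy U2 \<delta>2 \<longrightarrow>
        J c \<mu> \<gamma>1 \<delta>2 \<le> J c \<mu> \<gamma>1 \<gamma>2 \<and> J c \<mu> \<gamma>1 \<gamma>2 \<le> J c \<mu> \<delta>1 \<gamma>2)"

definition weak_conv_info :: "(nat \<Rightarrow> info) \<Rightarrow> info \<Rightarrow> bool" where
  "weak_conv_info \<mu>s \<mu> \<longleftrightarrow> (\<forall>f :: real \<times> real \<times> real \<Rightarrow> real.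
     continuous_on UNIV f \<and> bounded (range f) \<longrightarrow>
     (\<lambda>n. \<integral>z. f z \<partial>(\<mu>s n)) \<longlonglongrightarrow> (\<integral>z. f z \<partial>\<mu>))"

definition setwise_conv :: "(nat \<Rightarrow> info) \<Rightarrow> info \<Rightarrow> bool" where
  "setwise_conv \<mu>s \<mu> \<longleftrightarrow> (\<forall>A \<in> sets borel. (\<lambda>n. measure (\<mu>s n) A) \<longlonglongrightarrow> measure \<mu> A)"

text \<open>J* is the value at a saddle point (unique when saddle points exist); we require
  saddle points to exist so that J* is defined.\<close>
definition value_discontinuity :: "((nat \<Rightarrow> info) \<Rightarrow> info \<Rightarrow> bool) \<Rightarrow> bool" where
  "value_discontinuity conv \<longleftrightarrow>
    (\<exists>c U1 U2 \<zeta> \<mu>s \<mu> \<gamma>s1 \<gamma>s2 \<gamma>1 \<gamma>2.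
       A2 c U1 U2 \<and> A4 U1 U2 \<and>
       info_structure \<mu> \<and> (\<forall>n. info_structure (\<mu>s n)) \<and>
       prior \<mu> = \<zeta> \<and> (\<forall>n. prior (\<mu>s n) = \<zeta>) \<and>
       conv \<mu>s \<mu> \<and>
       (\<forall>n. saddle c U1 U2 (\<mu>s n) (\<gamma>s1 n) (\<gamma>s2 n)) \<and> saddle c U1 U2 \<mu> \<gamma>1 \<gamma>2 \<and>
       \<not> ((\<lambda>n. J c (\<mu>s n) (\<gamma>s1 n) (\<gamma>s2 n)) \<longlonglongrightarrow> J c \<mu> \<gamma>1 \<gamma>2))"

end

theory Submission
  imports Defs
begin

text \<open>Draw t from Lebesgue measure on (-1,1) with density (1 + s t)/2, where the bias s is odd
  with \<open>\<bar>s\<bar> \<le> 1\<close>; the state is x = sgn t, the minimizer observes \<open>\<bar>t\<bar>\<close> and the maximizer observes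
  nothing. For the cost \<open>u\<^sup>2 - 2 x u\<close>, averaging over t and -t gives
  \<open>J(\<delta>) = \<integral> ((\<delta>\<bar>t\<bar> - s\<bar>t\<bar>)\<^sup>2 - (s\<bar>t\<bar>)\<^sup>2) / 2\<close>, so playing the conditional mean \<open>s\<bar>t\<bar>\<close> is
  a saddle point and the value is \<open>-\<integral> s\<^sup>2 / 2\<close>. The sines \<open>sin (2\<pi>(n+1)t)\<close> are odd,
  orthonormal and of mean zero on (0,1), so they all induce the uniform prior on the state, and
  by Bessel's inequality their integrals against any bounded measurable function converge to
  those of the uninformative bias s = 0. Yet their values are -1/2, while the limit has value 0.\<close>

lemma bounded_const_comp: "bounded ((\<lambda>x. c) ` S)"
  by (rule bounded_subset[of "{c}"]) auto

lemma bounded_mult_comp: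
  fixes f g :: "'a \<Rightarrow> 'b::real_normed_algebra"
  assumes "bounded (f ` S)" "bounded (g ` S)"
  shows "bounded ((\<lambda>x. f x * g x) ` S)"
proof -
  obtain B C where B: "\<And>x. x \<in> S \<Longrightarrow> norm (f x) \<le> B" and C: "\<And>x. x \<in> S \<Longrightarrow> norm (g x) \<le> C"
    using assms by (auto simp: bounded_iff)
  have "norm (f x * g x) \<le> B * C" if "x \<in> S" for x
    using B[OF that] C[OF that] norm_ge_zero[of "f x"] norm_ge_zero[of "g x"]
    by (meson mult_mono norm_mult_ineq order_trans)
  then show ?thesis
    unfolding bounded_iff by blast
qed

lemma bounded_divide_comp:
  fixes f :: "'a \<Rightarrow> 'b::real_normed_field"
  shows "bounded (f ` S) \<Longrightarrow> bounded ((\<lambda>x. f x / c) ` S)"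
  using bounded_mult_comp[OF _ bounded_const_comp, of f S "inverse c"]
  by (simp add: divide_inverse)

lemma bounded_power_comp:
  fixes f :: "'a \<Rightarrow> 'b::real_normed_algebra_1"
  shows "bounded (f ` S) \<Longrightarrow> bounded ((\<lambda>x. f x ^ n) ` S)"
  by (induction n) (simp_all add: bounded_const_comp bounded_mult_comp)

lemma bounded_sgn_comp:
  fixes f :: "'a \<Rightarrow> 'b::real_normed_vector"
  shows "bounded ((\<lambda>x. sgn (f x)) ` S)"
  unfolding bounded_iff by (auto intro!: exI[of _ 1] simp: norm_sgn)

lemma bounded_comp_range: "bounded (range f) \<Longrightarrow> bounded ((\<lambda>x. f (g x)) ` S)"
  by (rule bounded_subset) auto

lemmas bounded_comp_intros =
  bounded_const_comp bounded_plus_comp bounded_minus_comp uminus_bounded_comp[THEN iffD2]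
  bounded_mult_comp bounded_divide_comp bounded_power_comp bounded_sgn_comp

lemma (in finite_measure) integrable_bounded_image:
  fixes f :: "'a \<Rightarrow> 'b::{banach, second_countable_topology}"
  assumes "f \<in> borel_measurable M" "bounded (f ` space M)"
  shows "integrable M f"
  using assms by (auto simp: bounded_iff intro: integrable_const_bound)

lemma (in finite_measure) orthonormal_coefficients_tendsto_zero:
  fixes e :: "nat \<Rightarrow> 'a \<Rightarrow> real" and h :: "'a \<Rightarrow> real"
  assumes [measurable]: "\<And>k. e k \<in> borel_measurable M" "h \<in> borel_measurable M"
    and e_bounded: "\<And>k. bounded (e k ` space M)" and h_bounded: "bounded (h ` space M)"
    and orthonormal: "\<And>j k. (\<integral>x. e j x * e k x \<partial>M) = (if j = k then 1 else 0)"
  shows "(\<lambda>k. \<integral>x. e k x * h x \<partial>M) \<longlonglongrightarrow> 0"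
proof -
  define a where "a k = (\<integral>x. e k x * h x \<partial>M)" for k
  have int_eh: "integrable M (\<lambda>x. e k x * h x)" for k
    by (intro integrable_bounded_image bounded_mult_comp e_bounded h_bounded) simp
  have int_ee: "integrable M (\<lambda>x. e j x * e k x)" for j k
    by (intro integrable_bounded_image bounded_mult_comp e_bounded) simp
  have int_hh: "integrable M (\<lambda>x. (h x)\<^sup>2)"
    by (intro integrable_bounded_image bounded_power_comp h_bounded) simp
  have partial_sums_le: "(\<Sum>k<N. (a k)\<^sup>2) \<le> (\<integral>x. (h x)\<^sup>2 \<partial>M)" for N
  proof -
    define S where "S x = (\<Sum>k<N. a k * e k x)" for x
    have expand: "(h x - S x)\<^sup>2 = (h x)\<^sup>2 - 2 * (\<Sum>k<N. a k * (e k x * h x))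
        + (\<Sum>j<N. \<Sum>k<N. a j * a k * (e j x * e k x))" for x
    proof -
      have "(S x)\<^sup>2 = (\<Sum>j<N. \<Sum>k<N. a j * a k * (e j x * e k x))"
        unfolding S_def power2_eq_square sum_product by (simp add: algebra_simps)
      moreover have "h x * S x = (\<Sum>k<N. a k * (e k x * h x))"
        unfolding S_def sum_distrib_left by (simp add: algebra_simps)
      ultimately show ?thesis by (simp add: power2_diff)
    qed
    have "0 \<le> (\<integral>x. (h x - S x)\<^sup>2 \<partial>M)" by simp
    also have "\<dots> = (\<integral>x. (h x)\<^sup>2 \<partial>M) - 2 * (\<Sum>k<N. a k * a k)
        + (\<Sum>j<N. \<Sum>k<N. a j * a k * (if j = k then 1 else 0))"
      unfolding expand by (simp add: int_hh int_eh int_ee a_def orthonormal integrable_sum)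
    also have "\<dots> = (\<integral>x. (h x)\<^sup>2 \<partial>M) - (\<Sum>k<N. (a k)\<^sup>2)"
      by (simp add: if_distrib sum.delta power2_eq_square cong: if_cong)
    finally show ?thesis by simp
  qed
  have "summable (\<lambda>k. (a k)\<^sup>2)"
    by (rule summableI_nonneg_bounded[OF _ partial_sums_le]) simp
  then have "(\<lambda>k. (a k)\<^sup>2) \<longlonglongrightarrow> 0"
    by (rule summable_LIMSEQ_zero)
  then have "(\<lambda>k. sqrt ((a k)\<^sup>2)) \<longlonglongrightarrow> 0"
    using tendsto_real_sqrt by fastforce
  then show ?thesis
    by (simp add: a_def tendsto_rabs_zero_iff)
qed

definition leb_pm1 :: "real measure" where
  "leb_pm1 = density lborel (\<lambda>t. ennreal (indicator {-1<..<1} t))"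

lemma sets_leb_pm1 [simp, measurable_cong]: "sets leb_pm1 = sets borel"
  by (simp add: leb_pm1_def)

lemma space_leb_pm1 [simp]: "space leb_pm1 = UNIV"
  by (simp add: leb_pm1_def)

lemma measurable_leb_pm1 [simp]: "measurable leb_pm1 N = measurable borel N"
  by (simp add: measurable_def)

lemma emeasure_leb_pm1_space: "emeasure leb_pm1 (space leb_pm1) = 2"
proof -
  have "emeasure leb_pm1 (space leb_pm1) = (\<integral>\<^sup>+ t. ennreal (indicator {-1<..<1::real} t) \<partial>lborel)"
    by (simp add: leb_pm1_def emeasure_density)
  also have "\<dots> = 2"
    by (subst ennreal_indicator, subst nn_integral_indicator) auto
  finally show ?thesis .
qed

interpretation leb_pm1: finite_measure leb_pm1
  by standard (use emeasure_leb_pm1_space in simp)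

lemma measure_leb_pm1_UNIV [simp]: "measure leb_pm1 UNIV = 2"
  using emeasure_leb_pm1_space by (simp add: measure_def)

lemma integrable_leb_pm1:
  fixes f :: "real \<Rightarrow> real"
  shows "f \<in> borel_measurable borel \<Longrightarrow> bounded (range f) \<Longrightarrow> integrable leb_pm1 f"
  by (intro leb_pm1.integrable_bounded_image) simp_all

lemma integral_leb_pm1_lborel:
  fixes f :: "real \<Rightarrow> real"
  assumes [measurable]: "f \<in> borel_measurable borel"
  shows "(\<integral>t. f t \<partial>leb_pm1) = (\<integral>t. indicator {-1<..<1} t * f t \<partial>lborel)"
  unfolding leb_pm1_def by (subst integral_density) auto

lemma integral_leb_pm1_reflect:
  fixes f :: "real \<Rightarrow> real"
  assumes [measurable]: "f \<in> borel_measurable borel"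
  shows "(\<integral>t. f (- t) \<partial>leb_pm1) = (\<integral>t. f t \<partial>leb_pm1)"
proof -
  define g where "g t = indicator {-1<..<1} t * f t" for t
  have "(\<integral>t. g t \<partial>lborel) = \<bar>-1\<bar> *\<^sub>R (\<integral>t. g (0 + (-1) * t) \<partial>lborel)"
    by (rule lborel_integral_real_affine) simp
  moreover have "indicator {-1<..<1} (- t) = (indicator {-1<..<1} t :: real)" for t :: real
    by (auto simp: indicator_def)
  ultimately show ?thesis
    by (simp add: integral_leb_pm1_lborel g_def)
qed

lemma integral_leb_pm1_odd:
  fixes f :: "real \<Rightarrow> real"
  assumes "f \<in> borel_measurable borel" and odd: "\<And>t. f (- t) = - f t"
  shows "(\<integral>t. f t \<partial>leb_pm1) = 0"
  using integral_leb_pm1_reflect[OF assms(1)] by (simp add: odd)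

lemma integral_leb_pm1_even_part:
  fixes f :: "real \<Rightarrow> real"
  assumes [measurable]: "f \<in> borel_measurable borel" and "bounded (range f)"
  shows "(\<integral>t. f t \<partial>leb_pm1) = (\<integral>t. (f t + f (- t)) / 2 \<partial>leb_pm1)"
proof -
  have "integrable leb_pm1 f" "integrable leb_pm1 (\<lambda>t. f (- t))"
    using assms by (auto intro: integrable_leb_pm1 bounded_comp_range)
  then show ?thesis
    by (simp add: integral_leb_pm1_reflect)
qed

lemma interval_integral_FTC_real:
  fixes f F :: "real \<Rightarrow> real"
  assumes "a \<le> b" "continuous_on {a..b} f"
    and "\<And>x. a \<le> x \<Longrightarrow> x \<le> b \<Longrightarrow> (F has_real_derivative f x) (at x)"
  shows "(LBINT t=a..b. f t) = F b - F a"
  using assms by (intro interval_integral_FTC_finite)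
    (auto simp: has_real_derivative_iff_has_vector_derivative[symmetric]
      intro: has_field_derivative_at_within)

lemma integral_leb_pm1_interval:
  fixes f :: "real \<Rightarrow> real"
  assumes "f \<in> borel_measurable borel"
  shows "(\<integral>t. f t \<partial>leb_pm1) = (LBINT t=ereal (-1)..ereal 1. f t)"
  unfolding integral_leb_pm1_lborel[OF assms]
  by (simp add: interval_lebesgue_integral_def set_lebesgue_integral_def)

lemma interval_integrable_leb_pm1:
  fixes f :: "real \<Rightarrow> real"
  assumes [measurable]: "f \<in> borel_measurable borel" and "integrable leb_pm1 f"
  shows "interval_lebesgue_integrable lborel (ereal (-1)) (ereal 1) f"
proof -
  have "integrable lborel (\<lambda>t. indicator {-1<..<1} t *\<^sub>R f t)"
    using assms(2) unfolding leb_pm1_def by (subst (asm) integrable_density) auto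
  then show ?thesis
    by (simp add: interval_lebesgue_integrable_def set_integrable_def)
qed

lemma borel_measurable_cos [measurable]:
  "(\<lambda>t. cos (c * t :: real)) \<in> borel_measurable borel"
  by (intro borel_measurable_continuous_onI continuous_intros)

lemma integral_leb_pm1_cos:
  fixes m :: int
  shows "(\<integral>t. cos (2 * pi * m * t) \<partial>leb_pm1) = (if m = 0 then 2 else 0)"
proof (cases "m = 0")
  case False
  have "(\<integral>t. cos (2 * pi * m * t) \<partial>leb_pm1)
      = sin (2 * pi * m * 1) / (2 * pi * m) - sin (2 * pi * m * (-1)) / (2 * pi * m)"
    unfolding integral_leb_pm1_interval[OF borel_measurable_cos]
    by (rule interval_integral_FTC_real)
      (use False in \<open>auto intro!: continuous_intros derivative_eq_intros\<close>)
  also have "\<dots> = 0"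
    using sin_int_2pin[of m] sin_int_2pin[of "- m"] by (simp add: mult.commute)
  finally show ?thesis
    using False by simp
qed simp

definition sine_mode :: "nat \<Rightarrow> real \<Rightarrow> real" where
  "sine_mode k t = sin (2 * pi * real (Suc k) * t)"

lemma borel_measurable_sine_mode [measurable]: "sine_mode k \<in> borel_measurable borel"
  unfolding sine_mode_def by (intro borel_measurable_continuous_onI continuous_intros)

lemma abs_sine_mode_le: "\<bar>sine_mode k t\<bar> \<le> 1"
  by (simp add: sine_mode_def)

lemma bounded_range_sine_mode: "bounded (range (sine_mode k))"
  unfolding bounded_iff using abs_sine_mode_le by auto

lemma sine_mode_minus: "sine_mode k (- t) = - sine_mode k t"
  by (simp add: sine_mode_def)

lemma sine_mode_orthonormal:
  "(\<integral>t. sine_mode j t * sine_mode k t \<partial>leb_pm1) = (if j = k then 1 else 0)"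
proof -
  define cos_int :: "int \<Rightarrow> real \<Rightarrow> real" where "cos_int m t = cos (2 * pi * m * t)" for m t
  have integrable_cos: "integrable leb_pm1 (cos_int m)" for m
    unfolding cos_int_def
    by (intro integrable_leb_pm1 borel_measurable_cos) (auto simp: bounded_iff intro: exI[of _ 1])
  have "(\<lambda>t. sine_mode j t * sine_mode k t)
      = (\<lambda>t. (cos_int (int j - int k) t - cos_int (int j + int k + 2) t) / 2)"
    by (simp add: sine_mode_def cos_int_def sin_times_sin algebra_simps)
  then have "(\<integral>t. sine_mode j t * sine_mode k t \<partial>leb_pm1)
      = ((\<integral>t. cos_int (int j - int k) t \<partial>leb_pm1) - (\<integral>t. cos_int (int j + int k + 2) t \<partial>leb_pm1)) / 2"
    by (simp add: integrable_cos)
  also have "\<dots> = (if j = k then 1 else 0)"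
    by (simp only: cos_int_def integral_leb_pm1_cos) auto
  finally show ?thesis .
qed

lemma integral_sine_mode_sgn: "(\<integral>t. sine_mode k t * sgn t \<partial>leb_pm1) = 0"
proof -
  define c where "c = 2 * pi * real (Suc k)"
  have "c \<noteq> 0"
    by (simp add: c_def)
  have cos_c: "cos c = 1"
    using cos_int_2pin[of "int (Suc k)"] by (simp add: c_def)
  have "(\<integral>t. sine_mode k t * sgn t \<partial>leb_pm1) = (LBINT t=ereal (-1)..ereal 1. sine_mode k t * sgn t)"
    by (rule integral_leb_pm1_interval) simp
  also have "\<dots> = (LBINT t=ereal (-1)..ereal 0. sine_mode k t * sgn t)
      + (LBINT t=ereal 0..ereal 1. sine_mode k t * sgn t)"
  proof (rule interval_integral_sum[symmetric])
    have "bounded (range (\<lambda>t. sine_mode k t * sgn t))"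
      by (intro bounded_mult_comp bounded_range_sine_mode bounded_sgn_comp)
    then show "interval_lebesgue_integrable lborel (min (ereal (-1)) (min (ereal 0) (ereal 1)))
        (max (ereal (-1)) (max (ereal 0) (ereal 1))) (\<lambda>t. sine_mode k t * sgn t)"
      by (simp add: interval_integrable_leb_pm1 integrable_leb_pm1)
  qed
  also have "(LBINT t=ereal (-1)..ereal 0. sine_mode k t * sgn t) = (LBINT t=ereal (-1)..ereal 0. - sin (c * t))"
    by (rule interval_integral_cong) (auto simp: sine_mode_def c_def)
  also have "\<dots> = cos (c * 0) / c - cos (c * (-1)) / c"
    by (rule interval_integral_FTC_real) (use \<open>c \<noteq> 0\<close> in \<open>auto intro!: continuous_intros derivative_eq_intros\<close>)
  also have "(LBINT t=ereal 0..ereal 1. sine_mode k t * sgn t) = (LBINT t=ereal 0..ereal 1. sin (c * t))"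
    by (rule interval_integral_cong) (auto simp: sine_mode_def c_def)
  also have "\<dots> = - cos (c * 1) / c - (- cos (c * 0) / c)"
    by (rule interval_integral_FTC_real) (use \<open>c \<noteq> 0\<close> in \<open>auto intro!: continuous_intros derivative_eq_intros\<close>)
  finally show ?thesis
    using cos_c by simp
qed

lemma borel_measurable_fst_borel [measurable]:
  "(fst :: 'a::second_countable_topology \<times> 'b::second_countable_topology \<Rightarrow> 'a) \<in> borel_measurable borel"
  by (intro borel_measurable_continuous_onI continuous_on_fst continuous_on_id)

lemma borel_measurable_snd_borel [measurable]:
  "(snd :: 'a::second_countable_topology \<times> 'b::second_countable_topology \<Rightarrow> 'b) \<in> borel_measurable borel"
  by (intro borel_measurable_continuous_onI continuous_on_snd continuous_on_id)

definition outcome :: "real \<Rightarrow> real \<times> real \<times> real" where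
  "outcome t = (sgn t, \<bar>t\<bar>, 0)"

lemma borel_measurable_outcome [measurable]: "outcome \<in> borel_measurable borel"
  unfolding outcome_def by measurable

definition biased_info :: "(real \<Rightarrow> real) \<Rightarrow> info" where
  "biased_info s = distr (density leb_pm1 (\<lambda>t. ennreal ((1 + s t) / 2))) borel outcome"

text \<open>Under \<open>biased_info s\<close> the conditional mean of the state given \<open>\<bar>t\<bar>\<close> is \<open>s \<bar>t\<bar>\<close>. The last
  condition says that s has mean zero on (0,1); it makes the prior uniform on {-1,1} for every s.\<close>

definition bias_profile :: "(real \<Rightarrow> real) \<Rightarrow> bool" where
  "bias_profile s \<longleftrightarrow> s \<in> borel_measurable borel \<and> (\<forall>t. \<bar>s t\<bar> \<le> 1) \<and> (\<forall>t. s (- t) = - s t)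
     \<and> (\<integral>t. s t * sgn t \<partial>leb_pm1) = 0"

lemma bias_profile_zero: "bias_profile (\<lambda>_. 0)"
  by (simp add: bias_profile_def)

lemma bias_profile_sine_mode: "bias_profile (sine_mode k)"
  by (simp add: bias_profile_def abs_sine_mode_le sine_mode_minus integral_sine_mode_sgn)

lemma sets_biased_info [simp, measurable_cong]: "sets (biased_info s) = sets borel"
  by (simp add: biased_info_def)

lemma space_biased_info [simp]: "space (biased_info s) = UNIV"
  by (simp add: biased_info_def)

context
  fixes s :: "real \<Rightarrow> real"
  assumes bias: "bias_profile s"
begin

lemma bias_measurable [measurable]: "s \<in> borel_measurable borel"
  using bias by (simp add: bias_profile_def)

lemma abs_bias_le: "\<bar>s t\<bar> \<le> 1"
  using bias by (simp add: bias_profile_def)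

lemma bounded_range_bias: "bounded (range s)"
  unfolding bounded_iff using abs_bias_le by auto

lemma bias_minus: "s (- t) = - s t"
  using bias by (simp add: bias_profile_def)

lemma bias_eq_sgn_mult_abs: "s t = sgn t * s \<bar>t\<bar>"
  using bias_minus[of t] bias_minus[of 0] by (cases "t < 0") (auto simp: sgn_if)

lemma policy_bias: "policy {-1..1} s"
  using abs_bias_le by (auto simp: policy_def abs_le_iff)

lemma integral_bias_mult_sgn_comp: "(\<integral>t. s t * g (sgn t) \<partial>leb_pm1) = 0"
proof -
  have "s t * g (sgn t) = (g 1 + g (-1)) / 2 * s t + (g 1 - g (-1)) / 2 * (s t * sgn t)" for t
    using bias_eq_sgn_mult_abs[of 0] by (cases "0 :: real" t rule: linorder_cases) (auto simp: field_simps)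
  moreover have "integrable leb_pm1 s" "integrable leb_pm1 (\<lambda>t. s t * sgn t)"
    by (simp_all add: integrable_leb_pm1 bounded_comp_intros bounded_range_bias)
  moreover have "(\<integral>t. s t \<partial>leb_pm1) = 0"
    by (rule integral_leb_pm1_odd) (simp_all add: bias_minus)
  ultimately show ?thesis
    using bias by (simp add: bias_profile_def)
qed

lemma bias_density_nonneg: "0 \<le> 1 + s t"
  using abs_bias_le[of t] by simp

lemma integral_biased_info:
  fixes F :: "real \<times> real \<times> real \<Rightarrow> real"
  assumes [measurable]: "F \<in> borel_measurable borel"
  shows "(\<integral>z. F z \<partial>biased_info s) = (\<integral>t. (1 + s t) / 2 * F (outcome t) \<partial>leb_pm1)"
  unfolding biased_info_def by (simp add: integral_distr integral_density bias_density_nonneg)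

lemma integral_bias_density: "(\<integral>t. (1 + s t) / 2 \<partial>leb_pm1) = 1"
proof -
  have "integrable leb_pm1 s"
    by (simp add: integrable_leb_pm1 bounded_range_bias)
  then show ?thesis
    using integral_bias_mult_sgn_comp[of "\<lambda>_. 1"] by simp
qed

lemma integral_biased_info_state:
  fixes g :: "real \<Rightarrow> real"
  assumes [measurable]: "g \<in> borel_measurable borel" and "bounded (range g)"
  shows "(\<integral>z. g (fst z) \<partial>biased_info s) = (\<integral>t. g (sgn t) \<partial>leb_pm1) / 2"
proof -
  have integrable: "integrable leb_pm1 (\<lambda>t. g (sgn t))" "integrable leb_pm1 (\<lambda>t. s t * g (sgn t))"
    by (simp_all add: integrable_leb_pm1 bounded_mult_comp bounded_comp_range assms bounded_range_bias)
  have "(\<integral>z. g (fst z) \<partial>biased_info s) = (\<integral>t. (1 + s t) / 2 * g (sgn t) \<partial>leb_pm1)"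
    by (subst integral_biased_info) (simp_all add: outcome_def)
  also have "\<dots> = (\<integral>t. g (sgn t) / 2 + s t * g (sgn t) / 2 \<partial>leb_pm1)"
    by (rule Bochner_Integration.integral_cong) (simp_all add: field_simps)
  also have "\<dots> = (\<integral>t. g (sgn t) \<partial>leb_pm1) / 2"
    using integrable by (simp add: integral_bias_mult_sgn_comp)
  finally show ?thesis .
qed

lemma prob_space_biased_info: "prob_space (biased_info s)"
proof
  have "emeasure (biased_info s) (space (biased_info s))
      = (\<integral>\<^sup>+ t. ennreal ((1 + s t) / 2) \<partial>leb_pm1)"
    by (simp add: biased_info_def emeasure_distr emeasure_density)
  also have "\<dots> = ennreal (\<integral>t. (1 + s t) / 2 \<partial>leb_pm1)"
    by (intro nn_integral_eq_integral integrable_leb_pm1 bounded_comp_intros bounded_range_bias AE_I2)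
      (simp_all add: bias_density_nonneg)
  finally show "emeasure (biased_info s) (space (biased_info s)) = 1"
    using integral_bias_density by simp
qed

lemma info_structure_biased_info: "info_structure (biased_info s)"
  by (simp add: info_structure_def prob_space_biased_info)

lemma emeasure_prior_biased_info:
  assumes [measurable]: "A \<in> sets borel"
  shows "emeasure (prior (biased_info s)) A = ennreal ((\<integral>t. indicator A (sgn t) \<partial>leb_pm1) / 2)"
proof -
  interpret prob_space "biased_info s"
    by (rule prob_space_biased_info)
  have "fst -` A \<in> sets (biased_info s)"
    using measurable_sets[OF borel_measurable_fst_borel assms] by simp
  then have "emeasure (prior (biased_info s)) A = measure (biased_info s) (fst -` A)"
    by (simp add: prior_def emeasure_distr emeasure_eq_measure)
  also have "measure (biased_info s) (fst -` A) = (\<integral>z. indicator A (fst z) \<partial>biased_info s)"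
    by (simp add: indicator_vimage[symmetric])
  also have "\<dots> = (\<integral>t. indicator A (sgn t) \<partial>leb_pm1) / 2"
    by (rule integral_biased_info_state) (auto simp: bounded_iff intro: exI[of _ 1])
  finally show ?thesis .
qed

end

lemma sets_prior [simp]: "sets (prior \<mu>) = sets borel"
  by (simp add: prior_def)

lemma prior_biased_info: "bias_profile s \<Longrightarrow> prior (biased_info s) = prior (biased_info (\<lambda>_. 0))"
  by (rule measure_eqI) (simp_all add: emeasure_prior_biased_info bias_profile_zero)

text \<open>The cost is \<open>(u - x)\<^sup>2 - x\<^sup>2\<close>; the state is clamped to [-1,1] only to make it bounded on
  all of X, and the clamp is inactive on the support of \<open>biased_info s\<close>.\<close>

definition cost :: "real \<times> real \<times> real \<Rightarrow> real" where
  "cost z = (fst (snd z))\<^sup>2 - 2 * max (-1) (min 1 (fst z)) * fst (snd z)"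

lemma A2_cost: "A2 cost {-1..1} {0}"
  unfolding A2_def
proof
  show "continuous_on (UNIV \<times> {-1..1} \<times> {0}) cost"
    unfolding cost_def by (intro continuous_intros)
  let ?S = "(UNIV :: real set) \<times> {-1..1::real} \<times> {0::real}"
  have "bounded ((\<lambda>z. fst (snd z)) ` ?S)"
    by (rule bounded_subset[of "{-1..1::real}"]) auto
  moreover have "bounded ((\<lambda>z. max (-1) (min 1 (fst z))) ` ?S)"
    by (rule bounded_subset[of "{-1..1::real}"]) (auto simp: max_def min_def)
  ultimately
  show "bounded (cost ` ?S)"
    unfolding cost_def by (intro bounded_comp_intros)
qed

lemma A4_actions: "A4 {-1..1} {0}"
  by (simp add: A4_def)

lemma policy_measurable: "policy U \<delta> \<Longrightarrow> \<delta> \<in> borel_measurable borel"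
  by (simp add: policy_def)

lemma bounded_range_policy: "policy {-1..1} \<delta> \<Longrightarrow> bounded (range \<delta>)"
  unfolding policy_def by (metis bounded_cbox bounded_subset cbox_interval)

lemma J_biased_info:
  assumes bias: "bias_profile s" and \<delta>: "policy {-1..1} \<delta>"
  shows "J cost (biased_info s) \<delta> \<delta>' = (\<integral>t. ((\<delta> \<bar>t\<bar> - s \<bar>t\<bar>)\<^sup>2 - (s \<bar>t\<bar>)\<^sup>2) / 2 \<partial>leb_pm1)"
proof -
  note [measurable] = bias_measurable[OF bias] policy_measurable[OF \<delta>]
  define G where "G = (\<lambda>t. (1 + s t) / 2 * ((\<delta> \<bar>t\<bar>)\<^sup>2 - 2 * sgn t * \<delta> \<bar>t\<bar>))"
  have "max (-1) (min 1 (sgn t)) = sgn t" for t :: real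
    by (simp add: sgn_if)
  then have "J cost (biased_info s) \<delta> \<delta>' = (\<integral>t. G t \<partial>leb_pm1)"
    unfolding J_def case_prod_unfold
    by (subst integral_biased_info[OF bias]) (simp_all add: cost_def outcome_def G_def)
  also have "\<dots> = (\<integral>t. (G t + G (- t)) / 2 \<partial>leb_pm1)"
  proof (rule integral_leb_pm1_even_part)
    have "bounded (range s)" "bounded (range (\<lambda>t. s \<bar>t\<bar>))" "bounded (range (\<lambda>t. \<delta> \<bar>t\<bar>))"
      using bounded_range_bias[OF bias] bounded_range_policy[OF \<delta>] by (auto intro: bounded_comp_range)
    then show "bounded (range G)"
      unfolding G_def by (intro bounded_comp_intros)
  qed (simp add: G_def)
  also have "\<dots> = (\<integral>t. ((\<delta> \<bar>t\<bar> - s \<bar>t\<bar>)\<^sup>2 - (s \<bar>t\<bar>)\<^sup>2) / 2 \<partial>leb_pm1)"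
  proof (rule Bochner_Integration.integral_cong)
    fix t :: real
    define \<sigma> a d where "\<sigma> = sgn t" and "a = s \<bar>t\<bar>" and "d = \<delta> \<bar>t\<bar>"
    have G_pos: "G t = (1 + \<sigma> * a) / 2 * (d\<^sup>2 - 2 * \<sigma> * d)"
      unfolding G_def \<sigma>_def a_def d_def by (subst bias_eq_sgn_mult_abs[OF bias]) simp
    have G_neg: "G (- t) = (1 - \<sigma> * a) / 2 * (d\<^sup>2 + 2 * \<sigma> * d)"
      unfolding G_def \<sigma>_def a_def d_def by (subst bias_eq_sgn_mult_abs[OF bias]) simp
    have sgn_sq: "\<sigma>\<^sup>2 * a = a"
      using bias_eq_sgn_mult_abs[OF bias, of 0] by (cases "t = 0") (simp_all add: \<sigma>_def a_def sgn_if)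
    have "(G t + G (- t)) / 2 = (d\<^sup>2 - 2 * (\<sigma>\<^sup>2 * a) * d) / 2"
      unfolding G_pos G_neg by (simp add: field_simps power2_eq_square)
    also have "\<dots> = ((d - a)\<^sup>2 - a\<^sup>2) / 2"
      unfolding sgn_sq by (simp add: power2_eq_square algebra_simps)
    finally show "(G t + G (- t)) / 2 = ((\<delta> \<bar>t\<bar> - s \<bar>t\<bar>)\<^sup>2 - (s \<bar>t\<bar>)\<^sup>2) / 2"
      by (simp only: a_def d_def)
  qed simp
  finally show ?thesis .
qed

lemma saddle_biased_info:
  assumes bias: "bias_profile s"
  shows "saddle cost {-1..1} {0} (biased_info s) s (\<lambda>_. 0)"
proof -
  have "J cost (biased_info s) s (\<lambda>_. 0) \<le> J cost (biased_info s) \<delta> (\<lambda>_. 0)"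
    if \<delta>: "policy {-1..1} \<delta>" for \<delta>
  proof -
    note [measurable] = bias_measurable[OF bias] policy_measurable[OF \<delta>]
    have "bounded (range (\<lambda>t. s \<bar>t\<bar>))" "bounded (range (\<lambda>t. \<delta> \<bar>t\<bar>))"
      using bounded_range_bias[OF bias] bounded_range_policy[OF \<delta>] by (auto intro: bounded_comp_range)
    then have "integrable leb_pm1 (\<lambda>t. ((\<delta> \<bar>t\<bar> - s \<bar>t\<bar>)\<^sup>2 - (s \<bar>t\<bar>)\<^sup>2) / 2)"
      "integrable leb_pm1 (\<lambda>t. ((s \<bar>t\<bar> - s \<bar>t\<bar>)\<^sup>2 - (s \<bar>t\<bar>)\<^sup>2) / 2)"
      by (simp_all add: integrable_leb_pm1 bounded_comp_intros)
    then show ?thesis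
      unfolding J_biased_info[OF bias \<delta>] J_biased_info[OF bias policy_bias[OF bias]]
      by (intro integral_mono) simp_all
  qed
  moreover have "J cost (biased_info s) s \<delta>' \<le> J cost (biased_info s) s (\<lambda>_. 0)" for \<delta>'
    by (simp only: J_biased_info[OF bias policy_bias[OF bias]] order_refl)
  ultimately show ?thesis
    unfolding saddle_def using policy_bias[OF bias] by (simp add: policy_def)
qed

lemma J_biased_info_value:
  assumes bias: "bias_profile s"
  shows "J cost (biased_info s) s (\<lambda>_. 0) = - (\<integral>t. (s t)\<^sup>2 \<partial>leb_pm1) / 2"
proof -
  have "(s \<bar>t\<bar>)\<^sup>2 = (s t)\<^sup>2" for t
    by (cases "t < 0") (simp_all add: bias_minus[OF bias])
  then have "J cost (biased_info s) s (\<lambda>_. 0) = (\<integral>t. - (s t)\<^sup>2 / 2 \<partial>leb_pm1)"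
    unfolding J_biased_info[OF bias policy_bias[OF bias]] by simp
  then show ?thesis
    by simp
qed

lemma integral_biased_info_sine_mode_tendsto:
  fixes F :: "real \<times> real \<times> real \<Rightarrow> real"
  assumes [measurable]: "F \<in> borel_measurable borel" and "bounded (range F)"
  shows "(\<lambda>n. \<integral>z. F z \<partial>biased_info (sine_mode n)) \<longlonglongrightarrow> (\<integral>z. F z \<partial>biased_info (\<lambda>_. 0))"
proof -
  have bounded: "bounded (range (\<lambda>t. F (outcome t)))"
    using assms(2) by (rule bounded_comp_range)
  have integrable: "integrable leb_pm1 (\<lambda>t. F (outcome t))"
    "integrable leb_pm1 (\<lambda>t. sine_mode n t * F (outcome t))" for n
    by (simp_all add: integrable_leb_pm1 bounded bounded_mult_comp bounded_range_sine_mode)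
  have sine: "(\<integral>z. F z \<partial>biased_info (sine_mode n))
      = (\<integral>t. F (outcome t) \<partial>leb_pm1) / 2 + (\<integral>t. sine_mode n t * F (outcome t) \<partial>leb_pm1) / 2" for n
  proof -
    have "(\<integral>z. F z \<partial>biased_info (sine_mode n))
        = (\<integral>t. F (outcome t) / 2 + sine_mode n t * F (outcome t) / 2 \<partial>leb_pm1)"
      by (simp add: integral_biased_info[OF bias_profile_sine_mode] field_simps)
    then show ?thesis
      using integrable by simp
  qed
  have zero: "(\<integral>z. F z \<partial>biased_info (\<lambda>_. 0)) = (\<integral>t. F (outcome t) \<partial>leb_pm1) / 2"
    by (simp add: integral_biased_info[OF bias_profile_zero])
  have "(\<lambda>n. \<integral>t. sine_mode n t * F (outcome t) \<partial>leb_pm1) \<longlonglongrightarrow> 0"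
    by (rule leb_pm1.orthonormal_coefficients_tendsto_zero)
      (simp_all add: bounded bounded_range_sine_mode sine_mode_orthonormal)
  then have "(\<lambda>n. (\<integral>t. F (outcome t) \<partial>leb_pm1) / 2 + (\<integral>t. sine_mode n t * F (outcome t) \<partial>leb_pm1) / 2)
      \<longlonglongrightarrow> (\<integral>t. F (outcome t) \<partial>leb_pm1) / 2 + 0"
    by (intro tendsto_add tendsto_const tendsto_divide_zero)
  then show ?thesis
    unfolding sine zero by simp
qed

lemma weak_conv_info_biased_info_sine_mode:
  "weak_conv_info (\<lambda>n. biased_info (sine_mode n)) (biased_info (\<lambda>_. 0))"
  unfolding weak_conv_info_def
  by (auto intro: integral_biased_info_sine_mode_tendsto borel_measurable_continuous_onI)

lemma setwise_conv_biased_info_sine_mode: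
  "setwise_conv (\<lambda>n. biased_info (sine_mode n)) (biased_info (\<lambda>_. 0))"
  unfolding setwise_conv_def
proof
  fix A :: "(real \<times> real \<times> real) set"
  assume [measurable]: "A \<in> sets borel"
  have "bounded (range (indicator A :: _ \<Rightarrow> real))"
    by (rule bounded_subset[of "{0, 1}"]) (auto simp: indicator_def)
  then show "(\<lambda>n. measure (biased_info (sine_mode n)) A) \<longlonglongrightarrow> measure (biased_info (\<lambda>_. 0)) A"
    using integral_biased_info_sine_mode_tendsto[of "indicator A"] by simp
qed

lemma value_discontinuity_of_biased_info_sine_mode:
  assumes "conv (\<lambda>n. biased_info (sine_mode n)) (biased_info (\<lambda>_. 0))"
  shows "value_discontinuity conv"
proof -
  have "J cost (biased_info (sine_mode n)) (sine_mode n) (\<lambda>_. 0) = - 1 / 2" for n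
    using J_biased_info_value[OF bias_profile_sine_mode] sine_mode_orthonormal[of n n]
    by (simp add: power2_eq_square)
  moreover have "J cost (biased_info (\<lambda>_. 0)) (\<lambda>_. 0) (\<lambda>_. 0) = 0"
    using J_biased_info_value[OF bias_profile_zero] by simp
  ultimately have values_diverge: "\<not> (\<lambda>n. J cost (biased_info (sine_mode n)) (sine_mode n) (\<lambda>_. 0))
      \<longlonglongrightarrow> J cost (biased_info (\<lambda>_. 0)) (\<lambda>_. 0) (\<lambda>_. 0)"
    by (simp add: LIMSEQ_const_iff)
  show ?thesis
    unfolding value_discontinuity_def
    by (rule exI[of _ cost], rule exI[of _ "{-1..1}"], rule exI[of _ "{0}"],
        rule exI[of _ "prior (biased_info (\<lambda>_. 0))"], rule exI[of _ "\<lambda>n. biased_info (sine_mode n)"],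
        rule exI[of _ "biased_info (\<lambda>_. 0)"], rule exI[of _ sine_mode], rule exI[of _ "\<lambda>_ _. 0"],
        rule exI[of _ "\<lambda>_. 0"], rule exI[of _ "\<lambda>_. 0"])
      (intro conjI allI A2_cost A4_actions info_structure_biased_info prior_biased_info
        saddle_biased_info bias_profile_zero bias_profile_sine_mode refl assms values_diverge)
qed

theorem theorem3p1:
  shows "value_discontinuity weak_conv_info \<and> value_discontinuity setwise_conv"
  using value_discontinuity_of_biased_info_sine_mode weak_conv_info_biased_info_sine_mode
    setwise_conv_biased_info_sine_mode
  by blast

end
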